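(* In the safe linear bandit setting with ROFUL as described in the context (with all its standing assumptions), on the event $\mathcal{E}_{\mathrm{conf}}$, for all $t\in[T]$, $$\theta^\top(x_*-\tilde x_t)\le\frac{2}{\nu}\beta_t\|x_t\|_{V_t^{-1}}.$$
   Context: Safe linear bandit setting: at round $t$ the learner plays $x_t$ in a closed set $\mathcal{X}\subseteq\mathbb{R}^d$ and observes $y_t=\theta^\top x_t+\epsilon_t$, $z_t=a^\top x_t+\eta_t$, with $\theta,a$ unknown and $b>0$ known; $\mathcal{Y}=\{x\in\mathcal{X}:a^\top x\le b\}$, $x_*\in\arg\max_{\mathcal{Y}}\theta^\top x$. Standing assumptions: $\mathcal{X}$ star-convex w.r.t. the origin, $\|x\|\le1$ on $\mathcal{X}$, $\theta^\top x_*>0$; $\|a\|\le S_a$, $\|\theta\|\le S_\theta$, $S=\max(S_a,S_\theta)$, $\nu=b/S_a\le1$. Parameters $\rho>0$, $\delta\in(0,1)$, $\lambda\ge1$. ROFUL: $V_t=\lambda I+\sum_{k<t}x_kx_k^\top$, $\hat a_t=V_t^{-1}\sum_{k<t}x_kz_k$, $\hat\theta_t=V_t^{-1}\sum_{k<t}x_ky_k$, $\beta_t=\rho\sqrt{d\log\left(\frac{1+(t-1)/\lambda}{\delta/2}\right)}+\sqrt\lambda S$, $\|x\|_M=\sqrt{x^\top Mx}$; $\mathcal{Y}_t^p=\{x\in\mathcal{X}:\hat a_t^\top x+\beta_t\|x\|_{V_t^{-1}}\le b\}$, $\mathcal{Y}_t^o=\{x\in\mathcal{X}:\hat a_t^\top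 x-\beta_t\|x\|_{V_t^{-1}}\le b\}$; $\tilde x_t\in\arg\max_{x\in\mathcal{Y}_t^o}(\hat\theta_t^\top x+\beta_t\|x\|_{V_t^{-1}})$; $\gamma_t=\max(\min(\nu/\|\tilde x_t\|,1),\max\{\mu\in[0,1]:\mu\tilde x_t\in\mathcal{Y}_t^p\})$; play $x_t=\gamma_t\tilde x_t$. $\mathcal{E}_{\mathrm{conf}}$: the event that $|x^\top(\hat\theta_t-\theta)|\le\beta_t\|x\|_{V_t^{-1}}$ and $|x^\top(\hat a_t-a)|\le\beta_t\|x\|_{V_t^{-1}}$ for all $x\in\mathcal{X}$ and all $t\ge1$. *)

theory Defs
  imports "HOL-Analysis.Analysis"
begin

definition outer :: "real^'n \<Rightarrow> real^'n^'n" where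
  "outer x = (\<chi> i j. x$i * x$j)"

text \<open>Gram matrix V_t = lambda I + sum_{k<t} x_k x_k^T (rounds are numbered 1,2,...).\<close>
definition gram :: "real \<Rightarrow> (nat \<Rightarrow> real^'n) \<Rightarrow> nat \<Rightarrow> real^'n^'n" where
  "gram lam x t = mat lam + (\<Sum>k\<in>{1..<t}. outer (x k))"

definition ridge_est :: "real \<Rightarrow> (nat \<Rightarrow> real^'n) \<Rightarrow> (nat \<Rightarrow> real) \<Rightarrow> nat \<Rightarrow> real^'n" where
  "ridge_est lam x obs t = matrix_inv (gram lam x t) *v (\<Sum>k\<in>{1..<t}. obs k *\<^sub>R x k)"

definition mnorm :: "real^'n^'n \<Rightarrow> real^'n \<Rightarrow> real" where
  "mnorm M x = sqrt (x \<bullet> (M *v x))"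

definition conf_radius :: "real \<Rightarrow> real \<Rightarrow> real \<Rightarrow> real \<Rightarrow> nat \<Rightarrow> nat \<Rightarrow> real" where
  "conf_radius rho delta lam S d t =
     rho * sqrt (real d * ln ((1 + (real t - 1) / lam) / (delta / 2))) + sqrt lam * S"

definition star_convex_origin :: "(real^'n) set \<Rightarrow> bool" where
  "star_convex_origin X \<longleftrightarrow> 0 \<in> X \<and> (\<forall>x\<in>X. closed_segment 0 x \<subseteq> X)"

definition safe_set :: "(real^'n) set \<Rightarrow> real^'n \<Rightarrow> real \<Rightarrow> (real^'n) set" where
  "safe_set X a b = {x\<in>X. a \<bullet> x \<le> b}"

text \<open>Pessimistic set Y_t^p and optimistic set Y_t^o (M is V_t^{-1}).\<close>
definition pess_set :: "(real^'n) set \<Rightarrow> real^'n \<Rightarrow> real \<Rightarrow> real^'n^'n \<Rightarrow> real \<Rightarrow> (real^'n) set" where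
  "pess_set X ahat beta M b = {x\<in>X. ahat \<bullet> x + beta * mnorm M x \<le> b}"

definition opt_set :: "(real^'n) set \<Rightarrow> real^'n \<Rightarrow> real \<Rightarrow> real^'n^'n \<Rightarrow> real \<Rightarrow> (real^'n) set" where
  "opt_set X ahat beta M b = {x\<in>X. ahat \<bullet> x - beta * mnorm M x \<le> b}"

text \<open>Scaling gamma_t = max(min(nu/||x||,1), max{mu in [0,1]: mu x in Y^p});
  nu/0 is read as +infinity, so min(nu/||0||,1) = 1.\<close>
definition roful_gamma :: "real \<Rightarrow> (real^'n) set \<Rightarrow> real^'n \<Rightarrow> real" where
  "roful_gamma nu Yp xt =
     max (if xt = 0 then 1 else min (nu / norm xt) 1)
         (Sup {mu \<in> {0..1}. mu *\<^sub>R xt \<in> Yp})"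

end

theory Submission
  imports Defs
begin

text \<open>The confidence bound on \<open>a\<close> puts every safe point, in particular \<open>x\<^sub>*\<close>, into the
  optimistic set, so \<open>x\<^sub>*\<close> competes with the optimistic choice \<open>xt\<close>; the confidence bound on
  \<open>\<theta>\<close> at both points then bounds the gap by twice the width of \<open>xt\<close>. The played point is
  \<open>xt\<close> scaled by \<open>\<gamma>\<^sub>t \<ge> \<nu>\<close> (as \<open>\<parallel>xt\<parallel> \<le> 1\<close>), so its width is at least \<open>\<nu>\<close> times that of \<open>xt\<close>.\<close>

lemma mnorm_scaleR: "mnorm M (c *\<^sub>R v) = \<bar>c\<bar> * mnorm M v"
proof -
  have "(c *\<^sub>R v) \<bullet> (M *v (c *\<^sub>R v)) = c\<^sup>2 * (v \<bullet> (M *v v))"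
    by (simp add: matrix_vector_mult_scaleR power2_eq_square)
  then show ?thesis
    by (simp add: mnorm_def real_sqrt_mult)
qed

lemma roful_gamma_ge:
  assumes "0 < nu" "nu \<le> 1" "norm v \<le> 1"
  shows "nu \<le> roful_gamma nu Yp v"
proof -
  have "nu \<le> (if v = 0 then 1 else min (nu / norm v) 1)"
    using assms by (auto simp: le_divide_eq)
  then show ?thesis
    unfolding roful_gamma_def by linarith
qed

lemma safe_set_subset_opt_set:
  assumes "\<forall>u\<in>X. \<bar>u \<bullet> (ahat - a)\<bar> \<le> beta * mnorm M u"
  shows "safe_set X a b \<subseteq> opt_set X ahat beta M b"
proof
  fix u assume "u \<in> safe_set X a b"
  then have "u \<in> X" "a \<bullet> u \<le> b"
    by (auto simp: safe_set_def)
  moreover have "ahat \<bullet> u - a \<bullet> u \<le> beta * mnorm M u"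
    using assms \<open>u \<in> X\<close> by (auto simp: inner_diff_right inner_commute)
  ultimately show "u \<in> opt_set X ahat beta M b"
    by (simp add: opt_set_def)
qed

lemma optimistic_gap_le:
  fixes theta thhat :: "'a::real_inner"
  assumes "\<bar>xs \<bullet> (thhat - theta)\<bar> \<le> w xs" "\<bar>x \<bullet> (thhat - theta)\<bar> \<le> w x"
    and "thhat \<bullet> xs + w xs \<le> thhat \<bullet> x + w x"
  shows "theta \<bullet> (xs - x) \<le> 2 * w x"
  using assms by (auto simp: inner_diff_right inner_commute)

theorem lemma4:
  fixes X :: "(real^'n) set" and theta a xstar :: "real^'n"
    and b Sa Stheta rho delta lam :: real
    and x xt :: "nat \<Rightarrow> real^'n" and eps eta :: "nat \<Rightarrow> real" and T :: nat
  defines "nu \<equiv> b / Sa"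
    and "Vinv \<equiv> (\<lambda>t. matrix_inv (gram lam x t))"
    and "thhat \<equiv> ridge_est lam x (\<lambda>k. theta \<bullet> x k + eps k)"
    and "ahat \<equiv> ridge_est lam x (\<lambda>k. a \<bullet> x k + eta k)"
    and "beta \<equiv> conf_radius rho delta lam (max Sa Stheta) CARD('n)"
  assumes X_closed: "closed X"
    and X_star: "star_convex_origin X"
    and X_bounded: "\<forall>u\<in>X. norm u \<le> 1"
    and b_pos: "b > 0"
    and Sa_pos: "Sa > 0"
    and a_bound: "norm a \<le> Sa"
    and theta_bound: "norm theta \<le> Stheta"
    and nu_le: "nu \<le> 1"
    and rho_pos: "rho > 0"
    and delta: "0 < delta" "delta < 1"
    and lam: "lam \<ge> 1"
    and xstar_safe: "xstar \<in> safe_set X a b"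
    and xstar_opt: "\<forall>u\<in>safe_set X a b. theta \<bullet> u \<le> theta \<bullet> xstar"
    and xstar_pos: "theta \<bullet> xstar > 0"
    and xt_in: "\<forall>t\<ge>1. xt t \<in> opt_set X (ahat t) (beta t) (Vinv t) b"
    and xt_max: "\<forall>t\<ge>1. \<forall>u\<in>opt_set X (ahat t) (beta t) (Vinv t) b.
        thhat t \<bullet> u + beta t * mnorm (Vinv t) u
          \<le> thhat t \<bullet> xt t + beta t * mnorm (Vinv t) (xt t)"
    and play: "\<forall>t\<ge>1. x t = roful_gamma nu (pess_set X (ahat t) (beta t) (Vinv t) b) (xt t) *\<^sub>R xt t"
    and E_conf: "\<forall>t\<ge>1. \<forall>u\<in>X.
        \<bar>u \<bullet> (thhat t - theta)\<bar> \<le> beta t * mnorm (Vinv t) u \<and>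
        \<bar>u \<bullet> (ahat t - a)\<bar> \<le> beta t * mnorm (Vinv t) u"
  shows "\<forall>t\<in>{1..T}. theta \<bullet> (xstar - xt t) \<le> 2 / nu * beta t * mnorm (Vinv t) (x t)"
proof
  fix t assume "t \<in> {1..T}"
  then have t: "1 \<le> t" by simp
  let ?w = "\<lambda>u. beta t * mnorm (Vinv t) u"
  let ?g = "roful_gamma nu (pess_set X (ahat t) (beta t) (Vinv t) b) (xt t)"
  have xstar_X: "xstar \<in> X" using xstar_safe by (simp add: safe_set_def)
  have xt_X: "xt t \<in> X" using xt_in t by (simp add: opt_set_def)
  have "xstar \<in> opt_set X (ahat t) (beta t) (Vinv t) b"
    using safe_set_subset_opt_set E_conf t xstar_safe by blast
  then have gap: "theta \<bullet> (xstar - xt t) \<le> 2 * ?w (xt t)"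
    using optimistic_gap_le[where w = ?w] E_conf xt_max t xstar_X xt_X by blast
  \<comment> \<open>\<open>sqrt\<close> is odd on negative arguments, so \<open>mnorm\<close> alone is not known to be nonnegative\<close>
  have w_nonneg: "0 \<le> ?w (xt t)"
    using E_conf t xt_X by (meson abs_ge_zero order_trans)
  have nu_pos: "0 < nu" using b_pos Sa_pos by (simp add: nu_def)
  have "nu \<le> ?g" using roful_gamma_ge nu_pos nu_le X_bounded xt_X by blast
  moreover have "?w (x t) = ?g * ?w (xt t)"
    using play t \<open>nu \<le> ?g\<close> nu_pos by (simp add: mnorm_scaleR)
  ultimately have "nu * ?w (xt t) \<le> ?w (x t)"
    using w_nonneg by (metis mult_right_mono)
  moreover have "nu * (theta \<bullet> (xstar - xt t)) \<le> nu * (2 * ?w (xt t))"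
    using gap nu_pos by (simp add: mult_left_mono)
  ultimately have "nu * (theta \<bullet> (xstar - xt t)) \<le> 2 * ?w (x t)"
    by linarith
  then show "theta \<bullet> (xstar - xt t) \<le> 2 / nu * beta t * mnorm (Vinv t) (x t)"
    using nu_pos by (simp add: field_simps)
qed

end
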